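(* Let $\{E^{(f)}\}_{f\in\mathcal F}$ be a finite family of linear operators on $\mathbb{C}^2$ (describing Eve's action on Bob's qubit), and define the (unnormalized) two-qubit state $$\rho=\sum_{k=0}^{3}\sum_{f\in\mathcal F}\big(I_A\otimes F R^{-k}E^{(f)}R^{k}\big)|\Psi\rangle\langle\Psi|\big(I_A\otimes F R^{-k}E^{(f)}R^{k}\big)^\dagger ,$$ where $|\Psi\rangle=\frac{1}{\sqrt2}\big(|0_z\rangle_A|\varphi_0\rangle_B+|1_z\rangle_A|\varphi_1\rangle_B\big)$. Assume $\operatorname{Tr}\rho>0$ and set $p_X=\langle\Psi^+|\rho|\Psi^+\rangle/\operatorname{Tr}\rho$, $p_Z=\langle\Phi^-|\rho|\Phi^-\rangle/\operatorname{Tr}\rho$, $p_Y=\langle\Psi^-|\rho|\Psi^-\rangle/\operatorname{Tr}\rho$. Let $e_b=p_X+p_Y$ (the bit error rate) and $a=p_Y$. Then $$p_X=e_b-a,\qquad p_Z=\tfrac32 e_b-a,\qquad p_Y=a,$$ and $e_b/2\le a\le e_b$.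
   Context: Qubits use two orthonormal bases related by $|0_x\rangle=(|0_z\rangle+|1_z\rangle)/\sqrt2$, $|1_x\rangle=(|0_z\rangle-|1_z\rangle)/\sqrt2$. Let $\alpha=\sin(\pi/8)$, $\beta=\cos(\pi/8)$, $|\varphi_0\rangle=\beta|0_x\rangle+\alpha|1_x\rangle$, $R=\cos(\pi/4)I+\sin(\pi/4)\big(|1_x\rangle\langle 0_x|-|0_x\rangle\langle 1_x|\big)$ and $|\varphi_m\rangle=R^{-m}|\varphi_0\rangle$ for $m=0,\dots,3$. The filtering operator is $F=\sin(\pi/8)|0_x\rangle\langle0_x|+\cos(\pi/8)|1_x\rangle\langle1_x|$. The Bell states are $|\Phi^\pm\rangle=(|0_z0_z\rangle\pm|1_z1_z\rangle)/\sqrt2$ and $|\Psi^\pm\rangle=(|0_z1_z\rangle\pm|1_z0_z\rangle)/\sqrt2$; $p_X,p_Y,p_Z$ are the probabilities of bit-flip, bit-and-phase-flip, and phase-flip errors relative to $|\Phi^+\rangle$. *)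

theory Defs
  imports "HOL-Analysis.Analysis"
begin

type_synonym qubit = "complex^2"
type_synonym op1 = "complex^2^2"
type_synonym qubit2 = "complex^(2 \<times> 2)"
type_synonym op2 = "complex^(2 \<times> 2)^(2 \<times> 2)"

(* computational (z) basis: index 1 ~ |0_z>, index 2 ~ |1_z> *)
definition ket0z :: qubit where "ket0z = (\<chi> i. if i = 1 then 1 else 0)"
definition ket1z :: qubit where "ket1z = (\<chi> i. if i = 1 then 0 else 1)"

definition ket0x :: qubit where "ket0x = (1 / sqrt 2) *\<^sub>R (ket0z + ket1z)"
definition ket1x :: qubit where "ket1x = (1 / sqrt 2) *\<^sub>R (ket0z - ket1z)"

definition ketbra :: "complex^'n \<Rightarrow> complex^'m \<Rightarrow> complex^'m^'n"
  where "ketbra u v = (\<chi> i j. u$i * cnj (v$j))"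

definition braket :: "complex^'n \<Rightarrow> complex^'n \<Rightarrow> complex"
  where "braket u v = (\<Sum>i\<in>UNIV. cnj (u$i) * v$i)"

definition adjoint_mat :: "complex^'n^'m \<Rightarrow> complex^'m^'n"
  where "adjoint_mat A = (\<chi> i j. cnj (A$j$i))"

definition tensor :: "complex^'a \<Rightarrow> complex^'b \<Rightarrow> complex^('a \<times> 'b)"
  where "tensor u v = (\<chi> p. u$(fst p) * v$(snd p))"

definition kron :: "complex^'a^'a \<Rightarrow> complex^'b^'b \<Rightarrow> complex^('a \<times> 'b)^('a \<times> 'b)"
  where "kron A B = (\<chi> p q. A$(fst p)$(fst q) * B$(snd p)$(snd q))"

fun mpow :: "complex^'n^'n \<Rightarrow> nat \<Rightarrow> complex^'n^'n" where
  "mpow A 0 = mat 1"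
| "mpow A (Suc n) = A ** mpow A n"

definition alpha :: real where "alpha = sin (pi / 8)"
definition beta :: real where "beta = cos (pi / 8)"

definition phi0 :: qubit where "phi0 = beta *\<^sub>R ket0x + alpha *\<^sub>R ket1x"

definition Rot :: op1 where
  "Rot = cos (pi / 4) *\<^sub>R mat 1 + sin (pi / 4) *\<^sub>R (ketbra ket1x ket0x - ketbra ket0x ket1x)"

definition Rinvpow :: "nat \<Rightarrow> op1" where "Rinvpow m = mpow (matrix_inv Rot) m"

definition phi :: "nat \<Rightarrow> qubit" where "phi m = Rinvpow m *v phi0"

definition Filt :: op1 where
  "Filt = sin (pi / 8) *\<^sub>R ketbra ket0x ket0x + cos (pi / 8) *\<^sub>R ketbra ket1x ket1x"

definition PhiP :: qubit2 where "PhiP = (1 / sqrt 2) *\<^sub>R (tensor ket0z ket0z + tensor ket1z ket1z)"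
definition PhiM :: qubit2 where "PhiM = (1 / sqrt 2) *\<^sub>R (tensor ket0z ket0z - tensor ket1z ket1z)"
definition PsiP :: qubit2 where "PsiP = (1 / sqrt 2) *\<^sub>R (tensor ket0z ket1z + tensor ket1z ket0z)"
definition PsiM :: qubit2 where "PsiM = (1 / sqrt 2) *\<^sub>R (tensor ket0z ket1z - tensor ket1z ket0z)"

definition PsiAB :: qubit2 where
  "PsiAB = (1 / sqrt 2) *\<^sub>R (tensor ket0z (phi 0) + tensor ket1z (phi 1))"

definition rho :: "'f set \<Rightarrow> ('f \<Rightarrow> op1) \<Rightarrow> op2" where
  "rho Fam E = (\<Sum>k\<in>{0..(3::nat)}. \<Sum>f\<in>Fam.
      (let M = kron (mat 1) (Filt ** Rinvpow k ** E f ** mpow Rot k)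
       in M ** ketbra PsiAB PsiAB ** adjoint_mat M))"

definition prob :: "op2 \<Rightarrow> qubit2 \<Rightarrow> real" where
  "prob r psi = Re (braket psi (r *v psi)) / Re (trace r)"

end

theory Submission
  imports Defs
begin

text \<open>
  Expanding the outer products, \<open>\<langle>v|\<rho>|v\<rangle>\<close> is the sum over Eve's operators \<open>e\<close> and the four
  rotations \<open>k\<close> of \<open>|\<langle>v|(I \<otimes> F R\<^sup>-\<^sup>k e R\<^sup>k)|\<Psi>\<rangle>|\<^sup>2\<close>. In the \<open>z\<close>-basis
  \<open>\<phi>\<^sub>0 = (\<beta>, \<alpha>)\<close>, \<open>\<phi>\<^sub>1 = (\<alpha>, \<beta>)\<close> with \<open>\<beta> = (1 + \<surd>2) \<alpha>\<close>, so for \<open>e = (p q; u w)\<close>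
  every such amplitude is an explicit linear form in \<open>p, q, u, w\<close>. Summing the squared
  amplitudes over the four rotations, all cross terms cancel and only
  \<open>A = |p - w|\<^sup>2 + |q + u|\<^sup>2\<close> and \<open>B = |q - u|\<^sup>2\<close> survive: the weights of
  \<open>\<Psi>\<^sup>+, \<Psi>\<^sup>-, \<Phi>\<^sup>-\<close> are \<open>A/8\<close>, \<open>A/8 + B/2\<close> and \<open>A/4 + B/4\<close>. Hence
  \<open>N\<^sub>Z = 3/2 N\<^sub>X + 1/2 N\<^sub>Y\<close> and \<open>0 \<le> N\<^sub>X \<le> N\<^sub>Y\<close>; dividing by \<open>Tr \<rho>\<close> gives the claim.
\<close>

lemma matrix_inv_unique:
  fixes A X :: "'a::comm_semiring_1^'n^'n"
  assumes "A ** X = mat 1" and "X ** A = mat 1"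
  shows "matrix_inv A = X"
proof -
  have inv: "A ** matrix_inv A = mat 1 \<and> matrix_inv A ** A = mat 1"
    unfolding matrix_inv_def by (rule someI_ex) (use assms in blast)
  then have "matrix_inv A = matrix_inv A ** (A ** X)"
    using assms by (simp add: matrix_mul_rid)
  also have "\<dots> = X"
    using inv by (simp add: matrix_mul_assoc matrix_mul_lid)
  finally show ?thesis .
qed

lemma sum_matrix_vector_mult:
  "sum A S *v (v::'a::comm_semiring_1^'n) = (\<Sum>x\<in>S. A x *v v)"
  by (simp add: vec_eq_iff matrix_vector_mult_def sum_distrib_right sum_component)
    (intro allI sum.swap)

lemma braket_sum_right: "braket v (sum w S) = (\<Sum>x\<in>S. braket v (w x))"
  unfolding braket_def by (simp add: sum_distrib_left sum_component) (intro allI sum.swap)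

lemma conjugate_ketbra:
  "M ** ketbra u u ** adjoint_mat M = ketbra (M *v u) (M *v u)"
  by (simp add: vec_eq_iff matrix_matrix_mult_def ketbra_def adjoint_mat_def
      matrix_vector_mult_def sum_distrib_left sum_distrib_right mult_ac)

lemma braket_ketbra_self: "braket v (ketbra w w *v v) = braket v w * cnj (braket v w)"
proof -
  have "ketbra w w *v v = cnj (braket v w) *s w"
    by (simp add: vec_eq_iff ketbra_def matrix_vector_mult_def braket_def
        sum_distrib_left mult_ac)
  moreover have "braket v (c *s w) = c * braket v w" for c
    unfolding braket_def by (simp add: sum_distrib_left mult.left_commute)
  ultimately show ?thesis
    by (simp only: mult.commute)
qed

lemma braket_add_left: "braket (u + v) w = braket u w + braket v w"
  and braket_add_right: "braket u (v + w) = braket u v + braket u w"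
  and braket_diff_left: "braket (u - v) w = braket u w - braket v w"
  and braket_scaleR_left: "braket (r *\<^sub>R u) w = of_real r * braket u w"
  and braket_scaleR_right: "braket u (r *\<^sub>R w) = of_real r * braket u w"
  by (simp_all add: braket_def algebra_simps sum.distrib sum_subtractf sum_distrib_left
      scaleR_conv_of_real[where 'a = complex])

lemma sum_UNIV_prod: "(\<Sum>p\<in>UNIV. f p) = (\<Sum>i\<in>UNIV. \<Sum>j\<in>UNIV. f (i, j))"
  by (simp add: sum.cartesian_product flip: UNIV_Times_UNIV)

lemma kron_mult_tensor: "kron A B *v tensor u v = tensor (A *v u) (B *v v)"
  by (simp add: vec_eq_iff kron_def tensor_def matrix_vector_mult_def sum_UNIV_prod
      sum_product mult_ac)

lemma braket_tensor: "braket (tensor a b) (tensor c d) = braket a c * braket b d"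
  by (simp add: braket_def tensor_def sum_UNIV_prod sum_product mult_ac)

definition vec2 :: "'a \<Rightarrow> 'a \<Rightarrow> 'a^2" where
  "vec2 x y = (\<chi> i. if i = 1 then x else y)"

definition mat2 :: "'a \<Rightarrow> 'a \<Rightarrow> 'a \<Rightarrow> 'a \<Rightarrow> 'a^2^2" where
  "mat2 p q u w = (\<chi> i. if i = 1 then vec2 p q else vec2 u w)"

lemma vec2_nth [simp]: "vec2 x y $ 1 = x" "vec2 x y $ 2 = y"
  by (simp_all add: vec2_def)

lemma mat2_nth [simp]: "mat2 p q u w $ 1 = vec2 p q" "mat2 p q u w $ 2 = vec2 u w"
  by (simp_all add: mat2_def)

lemma mat2_cases: obtains p q u w where "(M::'a^2^2) = mat2 p q u w"
proof
  show "M = mat2 (M$1$1) (M$1$2) (M$2$1) (M$2$2)"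
    by (simp add: vec_eq_iff forall_2)
qed

lemma vec2_add [simp]: "vec2 x y + vec2 x' y' = vec2 (x + x') (y + y')"
  and vec2_diff [simp]: "vec2 x y - vec2 x' y' = vec2 (x - x') (y - y')"
  and vec2_scaleR [simp]: "c *\<^sub>R vec2 x y = vec2 (c *\<^sub>R x) (c *\<^sub>R y)"
  by (simp_all add: vec_eq_iff forall_2)

lemma mat2_add [simp]:
    "mat2 p q u w + mat2 p' q' u' w' = mat2 (p + p') (q + q') (u + u') (w + w')"
  and mat2_diff [simp]:
    "mat2 p q u w - mat2 p' q' u' w' = mat2 (p - p') (q - q') (u - u') (w - w')"
  and mat2_scaleR [simp]:
    "c *\<^sub>R mat2 p q u w = mat2 (c *\<^sub>R p) (c *\<^sub>R q) (c *\<^sub>R u) (c *\<^sub>R w)"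
  by (simp_all add: vec_eq_iff forall_2)

lemma mat2_mult [simp]:
  "mat2 p q u w ** mat2 p' q' u' w' =
     mat2 (p * p' + q * u') (p * q' + q * w') (u * p' + w * u') (u * q' + w * w')"
  by (simp add: vec_eq_iff forall_2 matrix_matrix_mult_def sum_2)

lemma mat2_vec2_mult [simp]: "mat2 p q u w *v vec2 x y = vec2 (p * x + q * y) (u * x + w * y)"
  by (simp add: vec_eq_iff forall_2 matrix_vector_mult_def sum_2)

lemma mat_1_eq_mat2: "mat 1 = mat2 1 0 0 1"
  by (simp add: vec_eq_iff forall_2 mat_def)

lemma ketbra_vec2 [simp]:
  "ketbra (vec2 x y) (vec2 x' y') = mat2 (x * cnj x') (x * cnj y') (y * cnj x') (y * cnj y')"
  by (simp add: vec_eq_iff forall_2 ketbra_def)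

lemma ket0z_eq: "ket0z = vec2 1 0"
  and ket1z_eq: "ket1z = vec2 0 1"
  by (simp_all add: ket0z_def ket1z_def vec2_def vec_eq_iff)

lemma ket_z_nth: "ket0z $ 1 = 1" "ket0z $ 2 = 0" "ket1z $ 1 = 0" "ket1z $ 2 = 1"
  by (simp_all add: ket0z_eq ket1z_eq)

lemma braket_ket0z: "braket ket0z v = v $ 1"
  and braket_ket1z: "braket ket1z v = v $ 2"
  by (simp_all add: braket_def ket0z_def ket1z_def sum_2)

lemma alpha_pos: "alpha > 0"
  unfolding alpha_def by (rule sin_gt_zero) (simp_all add: pi_gt_zero)

lemma alpha_sq: "alpha\<^sup>2 = (2 - sqrt 2) / 4"
  using cos_double_sin[of "pi / 8"] cos_45 by (simp add: alpha_def)

lemma beta_eq: "beta = (1 + sqrt 2) * alpha"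
proof -
  have "2 * alpha * beta = sqrt 2 / 2"
    using sin_double[of "pi / 8"] sin_45 by (simp add: alpha_def beta_def)
  also have "\<dots> = 2 * alpha\<^sup>2 * (1 + sqrt 2)"
    by (simp add: alpha_sq algebra_simps)
  also have "\<dots> = 2 * alpha * ((1 + sqrt 2) * alpha)"
    by (simp add: power2_eq_square)
  finally show ?thesis
    using alpha_pos by simp
qed

text \<open>
  Complex copies of the real constants, so that \<open>algebra\<close> can treat them as atoms subject to
  \<open>invsqrt2_sq\<close>, \<open>calpha_sq\<close> and \<open>cbeta_eq\<close>.
\<close>

definition invsqrt2 :: complex where "invsqrt2 = of_real (1 / sqrt 2)"
definition calpha :: complex where "calpha = of_real alpha"
definition cbeta :: complex where "cbeta = of_real beta"

lemma invsqrt2_sq: "invsqrt2 * invsqrt2 = 1 / 2"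
  by (simp add: invsqrt2_def flip: of_real_mult)

lemma one_div_sqrt2: "1 / sqrt 2 = sqrt 2 / 2"
  by (simp add: field_simps)

lemma calpha_sq: "calpha * calpha = (1 - invsqrt2) / 2"
proof -
  have "alpha * alpha = (1 - 1 / sqrt 2) / 2"
    using alpha_sq by (simp add: power2_eq_square one_div_sqrt2)
  then have "complex_of_real (alpha * alpha) = of_real ((1 - 1 / sqrt 2) / 2)"
    by (rule arg_cong)
  then show ?thesis
    by (simp add: calpha_def invsqrt2_def)
qed

lemma cbeta_eq: "cbeta = (1 + 2 * invsqrt2) * calpha"
proof -
  have "beta = (1 + 2 * (1 / sqrt 2)) * alpha"
    using beta_eq by (simp add: one_div_sqrt2)
  then have "complex_of_real beta = of_real ((1 + 2 * (1 / sqrt 2)) * alpha)"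
    by (rule arg_cong)
  then show ?thesis
    by (simp add: cbeta_def calpha_def invsqrt2_def)
qed

lemma cnj_constants [simp]: "cnj invsqrt2 = invsqrt2" "cnj calpha = calpha" "cnj cbeta = cbeta"
  by (simp_all add: invsqrt2_def calpha_def cbeta_def)

lemma scaleR_invsqrt2: "(1 / sqrt 2) *\<^sub>R z = invsqrt2 * z"
  and scaleR_alpha: "alpha *\<^sub>R z = calpha * z"
  and scaleR_beta: "beta *\<^sub>R z = cbeta * z"
  for z :: complex
  by (simp_all add: invsqrt2_def calpha_def cbeta_def scaleR_conv_of_real)

lemma ket0x_eq: "ket0x = vec2 invsqrt2 invsqrt2"
  and ket1x_eq: "ket1x = vec2 invsqrt2 (- invsqrt2)"
  by (simp_all add: ket0x_def ket1x_def ket0z_eq ket1z_eq scaleR_invsqrt2)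

lemma Rot_eq: "Rot = mat2 invsqrt2 invsqrt2 (- invsqrt2) invsqrt2"
  by (simp add: Rot_def sin_45 cos_45 ket0x_eq ket1x_eq mat_1_eq_mat2 scaleR_invsqrt2
      invsqrt2_sq flip: one_div_sqrt2)

lemma Rot_inv_eq: "matrix_inv Rot = mat2 invsqrt2 (- invsqrt2) invsqrt2 invsqrt2"
  by (rule matrix_inv_unique) (simp_all add: Rot_eq mat_1_eq_mat2 invsqrt2_sq)

lemma mpow_numeral: "mpow A (numeral n) = A ** mpow A (pred_numeral n)"
  by (simp add: numeral_eq_Suc)

lemma mpow_Rot_eq:
  "mpow Rot 0 = mat2 1 0 0 1"
  "mpow Rot 1 = mat2 invsqrt2 invsqrt2 (- invsqrt2) invsqrt2"
  "mpow Rot 2 = mat2 0 1 (- 1) 0"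
  "mpow Rot 3 = mat2 (- invsqrt2) invsqrt2 (- invsqrt2) (- invsqrt2)"
  by (simp_all add: Rot_eq mpow_numeral mat_1_eq_mat2 invsqrt2_sq)

lemma Rinvpow_eq:
  "Rinvpow 0 = mat2 1 0 0 1"
  "Rinvpow 1 = mat2 invsqrt2 (- invsqrt2) invsqrt2 invsqrt2"
  "Rinvpow 2 = mat2 0 (- 1) 1 0"
  "Rinvpow 3 = mat2 (- invsqrt2) (- invsqrt2) invsqrt2 (- invsqrt2)"
  by (simp_all add: Rinvpow_def Rot_inv_eq mpow_numeral mat_1_eq_mat2 invsqrt2_sq)

lemma Filt_eq:
  "Filt = mat2 ((calpha + cbeta) / 2) ((calpha - cbeta) / 2)
              ((calpha - cbeta) / 2) ((calpha + cbeta) / 2)"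
  by (simp add: Filt_def ket0x_eq ket1x_eq scaleR_alpha scaleR_beta invsqrt2_sq field_simps
      flip: alpha_def beta_def)

lemma invsqrt2_beta_plus_alpha: "invsqrt2 * (cbeta + calpha) = cbeta"
  and invsqrt2_beta_minus_alpha: "invsqrt2 * (cbeta - calpha) = calpha"
  using cbeta_eq invsqrt2_sq by algebra+

lemma phi0_eq: "phi 0 = vec2 cbeta calpha"
proof -
  have "phi 0 = vec2 (invsqrt2 * (cbeta + calpha)) (invsqrt2 * (cbeta - calpha))"
    by (simp add: phi_def Rinvpow_def phi0_def ket0x_eq ket1x_eq scaleR_alpha scaleR_beta
        algebra_simps)
  then show ?thesis
    by (simp only: invsqrt2_beta_plus_alpha invsqrt2_beta_minus_alpha)
qed

lemma phi1_eq: "phi 1 = vec2 calpha cbeta"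
proof -
  have "phi 1 = matrix_inv Rot *v phi 0"
    by (simp add: phi_def Rinvpow_def)
  also have "\<dots> = vec2 (invsqrt2 * (cbeta - calpha)) (invsqrt2 * (cbeta + calpha))"
    by (simp add: Rot_inv_eq phi0_eq algebra_simps)
  finally show ?thesis
    by (simp only: invsqrt2_beta_plus_alpha invsqrt2_beta_minus_alpha)
qed

lemma kron_id_mult_PsiAB:
  "kron (mat 1) M *v PsiAB =
     (1 / sqrt 2) *\<^sub>R (tensor ket0z (M *v phi 0) + tensor ket1z (M *v phi 1))"
  by (simp add: PsiAB_def kron_mult_tensor matrix_vector_right_distrib
      linear_scale[OF matrix_vector_mul_linear])

lemma braket_Bell_kron_id_PsiAB:
  "braket PsiP (kron (mat 1) M *v PsiAB) = ((M *v phi 0) $ 2 + (M *v phi 1) $ 1) / 2"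
  "braket PsiM (kron (mat 1) M *v PsiAB) = ((M *v phi 0) $ 2 - (M *v phi 1) $ 1) / 2"
  "braket PhiM (kron (mat 1) M *v PsiAB) = ((M *v phi 0) $ 1 - (M *v phi 1) $ 2) / 2"
  by (simp_all add: PsiP_def PsiM_def PhiM_def kron_id_mult_PsiAB braket_tensor braket_ket0z
      braket_ket1z ket_z_nth braket_add_left braket_add_right braket_diff_left braket_scaleR_left
      braket_scaleR_right field_simps flip: of_real_mult)

definition kraus :: "nat \<Rightarrow> op1 \<Rightarrow> op1" where
  "kraus k e = Filt ** Rinvpow k ** e ** mpow Rot k"

definition bell_amp :: "qubit2 \<Rightarrow> nat \<Rightarrow> op1 \<Rightarrow> complex" where
  "bell_amp v k e = braket v (kron (mat 1) (kraus k e) *v PsiAB)"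

lemma bell_amp_table:
  fixes p q u w :: complex
  shows
    "bell_amp PsiP 0 (mat2 p q u w) = (q + u) / 4"
    "bell_amp PsiP 1 (mat2 p q u w) = (p - w) / 4"
    "bell_amp PsiP 2 (mat2 p q u w) = - (q + u) / 4"
    "bell_amp PsiP 3 (mat2 p q u w) = - (p - w) / 4"
    "bell_amp PsiM 0 (mat2 p q u w) = (w - p) / 4 + invsqrt2 / 2 * (u - q)"
    "bell_amp PsiM 1 (mat2 p q u w) = ((2 * invsqrt2 + 1) * u - (2 * invsqrt2 - 1) * q) / 4"
    "bell_amp PsiM 2 (mat2 p q u w) = (p - w) / 4 + invsqrt2 / 2 * (u - q)"
    "bell_amp PsiM 3 (mat2 p q u w) = ((2 * invsqrt2 - 1) * u - (2 * invsqrt2 + 1) * q) / 4"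
    "bell_amp PhiM 0 (mat2 p q u w) = invsqrt2 / 2 * (p - w) + (q - u) / 4"
    "bell_amp PhiM 1 (mat2 p q u w) = - ((2 * invsqrt2 - 1) * q + (2 * invsqrt2 + 1) * u) / 4"
    "bell_amp PhiM 2 (mat2 p q u w) = - invsqrt2 / 2 * (p - w) + (q - u) / 4"
    "bell_amp PhiM 3 (mat2 p q u w) = ((2 * invsqrt2 + 1) * q + (2 * invsqrt2 - 1) * u) / 4"
  unfolding bell_amp_def kraus_def braket_Bell_kron_id_PsiAB
    Filt_eq Rinvpow_eq mpow_Rot_eq phi0_eq phi1_eq
  by (simp_all add: cbeta_eq algebra_simps) (use calpha_sq invsqrt2_sq in algebra)+

definition bell_weight :: "qubit2 \<Rightarrow> op1 \<Rightarrow> real" where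
  "bell_weight v e = (\<Sum>k\<in>{0..3}. (cmod (bell_amp v k e))\<^sup>2)"

lemma sum_atLeast0_atMost_3: "(\<Sum>k\<in>{0..3::nat}. f k) = f 0 + f 1 + f 2 + f 3"
proof -
  have "{0..3::nat} = {0, 1, 2, 3}" by auto
  then show ?thesis by (simp add: add.assoc)
qed

lemma of_real_bell_weight:
  "complex_of_real (bell_weight v e) = (\<Sum>k\<in>{0..3}. bell_amp v k e * cnj (bell_amp v k e))"
  unfolding bell_weight_def of_real_sum complex_norm_square ..

lemma bell_weight_nonneg: "0 \<le> bell_weight v e"
  by (simp add: bell_weight_def sum_nonneg)

lemma bell_weight_PsiP:
  "bell_weight PsiP e = ((cmod (e$1$1 - e$2$2))\<^sup>2 + (cmod (e$1$2 + e$2$1))\<^sup>2) / 8"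
proof -
  obtain p q u w where e: "e = mat2 p q u w" by (rule mat2_cases)
  have "complex_of_real (bell_weight PsiP e) =
      of_real (((cmod (p - w))\<^sup>2 + (cmod (q + u))\<^sup>2) / 8)"
    unfolding of_real_add of_real_divide of_real_bell_weight sum_atLeast0_atMost_3 e
      bell_amp_table complex_norm_square
    by (simp add: field_simps)
  then show ?thesis
    by (simp only: of_real_eq_iff e) simp
qed

lemma bell_weight_PsiM:
  "bell_weight PsiM e =
     ((cmod (e$1$1 - e$2$2))\<^sup>2 + (cmod (e$1$2 + e$2$1))\<^sup>2) / 8 + (cmod (e$1$2 - e$2$1))\<^sup>2 / 2"
proof -
  obtain p q u w where e: "e = mat2 p q u w" by (rule mat2_cases)
  have "complex_of_real (bell_weight PsiM e) =
      of_real (((cmod (p - w))\<^sup>2 + (cmod (q + u))\<^sup>2) / 8 + (cmod (q - u))\<^sup>2 / 2)"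
    unfolding of_real_add of_real_divide of_real_bell_weight sum_atLeast0_atMost_3 e
      bell_amp_table complex_norm_square
    by (simp add: field_simps) (use invsqrt2_sq in algebra)
  then show ?thesis
    by (simp only: of_real_eq_iff e) simp
qed

lemma bell_weight_PhiM:
  "bell_weight PhiM e =
     ((cmod (e$1$1 - e$2$2))\<^sup>2 + (cmod (e$1$2 + e$2$1))\<^sup>2) / 4 + (cmod (e$1$2 - e$2$1))\<^sup>2 / 4"
proof -
  obtain p q u w where e: "e = mat2 p q u w" by (rule mat2_cases)
  have "complex_of_real (bell_weight PhiM e) =
      of_real (((cmod (p - w))\<^sup>2 + (cmod (q + u))\<^sup>2) / 4 + (cmod (q - u))\<^sup>2 / 4)"
    unfolding of_real_add of_real_divide of_real_bell_weight sum_atLeast0_atMost_3 e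
      bell_amp_table complex_norm_square
    by (simp add: field_simps) (use invsqrt2_sq in algebra)
  then show ?thesis
    by (simp only: of_real_eq_iff e) simp
qed

lemma bell_weight_PhiM_combination:
  "bell_weight PhiM e = 3 / 2 * bell_weight PsiP e + 1 / 2 * bell_weight PsiM e"
  unfolding bell_weight_PsiP bell_weight_PsiM bell_weight_PhiM by (simp add: field_simps)

lemma bell_weight_PsiP_le_PsiM: "bell_weight PsiP e \<le> bell_weight PsiM e"
  by (simp add: bell_weight_PsiP bell_weight_PsiM)

lemma Re_braket_rho: "Re (braket v (rho Fam E *v v)) = (\<Sum>f\<in>Fam. bell_weight v (E f))"
proof -
  have "braket v (rho Fam E *v v) =
      (\<Sum>k\<in>{0..3}. \<Sum>f\<in>Fam. bell_amp v k (E f) * cnj (bell_amp v k (E f)))"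
    unfolding rho_def Let_def sum_matrix_vector_mult braket_sum_right conjugate_ketbra
      braket_ketbra_self bell_amp_def kraus_def ..
  also have "\<dots> = (\<Sum>f\<in>Fam. complex_of_real (bell_weight v (E f)))"
    unfolding of_real_bell_weight by (rule sum.swap)
  finally show ?thesis
    by simp
qed

theorem theorem1:
  fixes Fam :: "'f set" and E :: "'f \<Rightarrow> complex^2^2"
  assumes "finite Fam"
    and "Re (trace (rho Fam E)) > 0"
  shows "let pX = prob (rho Fam E) PsiP; pZ = prob (rho Fam E) PhiM;
             pY = prob (rho Fam E) PsiM; eb = pX + pY; a = pY
         in pX = eb - a \<and> pZ = 3 / 2 * eb - a \<and> pY = a \<and> eb / 2 \<le> a \<and> a \<le> eb"
proof -
  define N where "N v = (\<Sum>f\<in>Fam. bell_weight v (E f))" for v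
  have prob: "prob (rho Fam E) v = N v / Re (trace (rho Fam E))" for v
    unfolding prob_def N_def Re_braket_rho ..
  have N_PhiM: "N PhiM = 3 / 2 * N PsiP + 1 / 2 * N PsiM"
    unfolding N_def by (simp add: bell_weight_PhiM_combination sum.distrib sum_distrib_left)
  have "N PsiP \<le> N PsiM"
    unfolding N_def by (rule sum_mono) (rule bell_weight_PsiP_le_PsiM)
  moreover have "0 \<le> N PsiP"
    unfolding N_def by (simp add: sum_nonneg bell_weight_nonneg)
  ultimately show ?thesis
    using assms(2) unfolding Let_def prob N_PhiM by (auto simp: field_simps)
qed

end
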